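(* Let $G=\mathbb{Z}_2\times\mathbb{Z}_2\times\mathbb{Z}_2=\langle x_1\rangle\times\langle x_2\rangle\times\langle x_3\rangle$ and $\Phi(x_1^{i_1}x_2^{i_2}x_3^{i_3},x_1^{j_1}x_2^{j_2}x_3^{j_3},x_1^{k_1}x_2^{k_2}x_3^{k_3})=\prod_{l=1}^3(-1)^{i_l[\frac{j_l+k_l}{2}]}$ ($i_l,j_l,k_l\in\{0,1\}$). Let $\{\chi_1,\dots,\chi_N\}$, $N\ge3$, be an admissible series of quasi-characters of $G$ with respect to $\Phi$, where $\chi_i$ is associated to $\widetilde\Phi_{x_i}$ for elements $x_1,\dots,x_N\in G\setminus\{1\}$, the first three of which are the generators $x_1,x_2,x_3$. Then, after permuting the indices $4,\dots,N$, one of the following holds: (1) $3\le N\le6$ and $x_4,\dots,x_N$ are distinct elements of $\{x_1,x_2,x_3\}$; (2) $N\ge5$, $x_4=x_k$ for some $k\in\{1,2,3\}$, and writing $\{i,j\}=\{1,2,3\}\setminus\{k\}$, $\chi_i(x_i)=\chi_j(x_j)$ and $x_5=\cdots=x_N=x_ix_j$; (3) $N\ge4$ and there are $1\le i<j\le3$ with $x_4=\cdots=x_N=x_ix_j$ and $\chi_i(x_i)=\chi_j(x_j)$; (4) $N\ge4$, $x_4=x_1x_2x_3$, and there are $1\le i<j\le3$ with $x_5=\cdots=x_N=x_ix_j$ and $\chi_i(x_i)=\chi_j(x_j)$.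
   Context: $\mathbbm{k}$ algebraically closed of characteristic $0$; $[x]$ the integer part. $\widetilde\Phi_g(e,f)=\frac{\Phi(g,e,f)\Phi(e,f,g)}{\Phi(e,g,f)}$. A quasi-character associated to a 2-cocycle $\omega$ is $\chi:G\to\mathbbm{k}^*$ with $\chi(1)=1$ and $\chi(f)\chi(g)=\omega(f,g)\chi(fg)$. A series $\{\chi_1,\dots,\chi_N\}$ is admissible with respect to $\Phi$ if $\chi_i$ is associated to $\widetilde\Phi_{x_i}$ with $x_i\ne1$, $G=\langle x_1,\dots,x_N\rangle$, $\chi_i(x_j)\chi_j(x_i)=1$ for all $i\ne j$, and $\chi_i(x_i)\ne1$ for all $i$. (Given $\chi_1,\chi_2,\chi_3$, each $\chi_j$ with $j\ge4$ is determined by its degree $x_j$; the paper phrases conditions such as $x_j=x_k$, $x_j=x_ix_j'$ as equalities of quasi-characters $\chi_j=\chi'_k$, $\chi_j=\chi_{ij}$, $\chi_j=\chi_{123}$.) *)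

theory Defs
  imports "HOL-Computational_Algebra.Polynomial"
begin

text \<open>The group G = Z2 x Z2 x Z2, elements written x1^i1 x2^i2 x3^i3 with exponents
  encoded as booleans (True = exponent 1).\<close>
type_synonym G = "bool \<times> bool \<times> bool"

definition gmul :: "G \<Rightarrow> G \<Rightarrow> G" where
  "gmul a b = (case a of (a1, a2, a3) \<Rightarrow> case b of (b1, b2, b3) \<Rightarrow>
      (a1 \<noteq> b1, a2 \<noteq> b2, a3 \<noteq> b3))"

definition gone :: G where "gone = (False, False, False)"

definition gen1 :: G where "gen1 = (True, False, False)"
definition gen2 :: G where "gen2 = (False, True, False)"
definition gen3 :: G where "gen3 = (False, False, True)"

definition gexp :: "G \<Rightarrow> nat \<Rightarrow> nat" where
  "gexp g l = (case g of (a1, a2, a3) \<Rightarrow>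
      (if l = 1 then of_bool a1 else if l = 2 then of_bool a2 else of_bool a3))"

definition Phi :: "G \<Rightarrow> G \<Rightarrow> G \<Rightarrow> 'a::field" where
  "Phi a b c = (\<Prod>l\<in>{1,2,3::nat}. (-1) ^ (gexp a l * ((gexp b l + gexp c l) div 2)))"

definition Phitilde :: "(G \<Rightarrow> G \<Rightarrow> G \<Rightarrow> 'a::field) \<Rightarrow> G \<Rightarrow> G \<Rightarrow> G \<Rightarrow> 'a" where
  "Phitilde \<Phi> g e f = \<Phi> g e f * \<Phi> e f g / \<Phi> e g f"

definition quasi_char :: "(G \<Rightarrow> G \<Rightarrow> 'a::field) \<Rightarrow> (G \<Rightarrow> 'a) \<Rightarrow> bool" where
  "quasi_char \<omega> \<chi> \<longleftrightarrow> (\<forall>g. \<chi> g \<noteq> 0) \<and> \<chi> gone = 1 \<and>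
     (\<forall>f g. \<chi> f * \<chi> g = \<omega> f g * \<chi> (gmul f g))"

inductive_set gen_by :: "G set \<Rightarrow> G set" for S where
  gen_one: "gone \<in> gen_by S"
| gen_elem: "s \<in> S \<Longrightarrow> s \<in> gen_by S"
| gen_mul: "a \<in> gen_by S \<Longrightarrow> b \<in> gen_by S \<Longrightarrow> gmul a b \<in> gen_by S"

definition admissible ::
  "(G \<Rightarrow> G \<Rightarrow> G \<Rightarrow> 'a::field) \<Rightarrow> nat \<Rightarrow> (nat \<Rightarrow> G \<Rightarrow> 'a) \<Rightarrow> (nat \<Rightarrow> G) \<Rightarrow> bool" where
  "admissible \<Phi> N \<chi> x \<longleftrightarrow>
     (\<forall>i\<in>{1..N}. quasi_char (Phitilde \<Phi> (x i)) (\<chi> i) \<and> x i \<noteq> gone) \<and>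
     gen_by (x ` {1..N}) = UNIV \<and>
     (\<forall>i\<in>{1..N}. \<forall>j\<in>{1..N}. i \<noteq> j \<longrightarrow> \<chi> i (x j) * \<chi> j (x i) = 1) \<and>
     (\<forall>i\<in>{1..N}. \<chi> i (x i) \<noteq> 1)"

definition alg_closed :: "'a::field itself \<Rightarrow> bool" where
  "alg_closed _ \<longleftrightarrow> (\<forall>p :: 'a poly. degree p \<ge> 1 \<longrightarrow> (\<exists>z. poly p z = 0))"

end

theory Submission
  imports Defs "HOL-Combinatorics.Transposition"
begin

text \<open>Identify an element g of G with its support, the set of generators occurring in it; then
  gmul is symmetric difference and \<open>\<Phi>(a,b,c) = (-1)^|a \<inter> b \<inter> c|\<close>. Hence a quasi-character of
  \<open>\<Phi>\<^sub>g\<close> is multiplicative on elements with disjoint supports, so it is the product of its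
  values on the generators. Put \<open>c m l = \<chi>\<^sub>m(x\<^sub>l)\<close> for \<open>m, l \<le> 3\<close>: admissibility gives
  \<open>c m l \<cdot> c l m = 1\<close> for \<open>m \<noteq> l\<close> and \<open>(c l l)\<^sup>2 = -1\<close>, and for \<open>q \<ge> 4\<close> it forces
  \<open>\<chi>\<^sub>q(x\<^sub>m) = \<chi>\<^sub>m(x\<^sub>q)\<^sup>-\<^sup>1\<close>. Expanding, \<open>\<chi>\<^sub>q(x\<^sub>r) \<chi>\<^sub>r(x\<^sub>q) = (-1)^|x\<^sub>q \<inter> x\<^sub>r|\<close> and
  \<open>\<chi>\<^sub>q(x\<^sub>q) = \<Prod>\<^bsub>l \<in> x\<^sub>q\<^esub> (c l l)\<^sup>-\<^sup>1\<close>, because all off-diagonal factors cancel.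
  So the degrees \<open>x\<^sub>q\<close>, \<open>q \<ge> 4\<close>, are nonempty subsets of {1,2,3} with pairwise even
  intersections, and a degree \<open>{i, j}\<close> forces \<open>c i i = c j j\<close> (two square roots of -1 whose
  product is not 1). The four cases list all such families: distinct singletons; a singleton
  and copies of the complementary pair; copies of one pair; {1,2,3} and copies of one pair.\<close>

definition supp :: "G \<Rightarrow> nat set" where
  "supp g = {l \<in> {1,2,3}. gexp g l = 1}"

definition gen :: "nat \<Rightarrow> G" where
  "gen l = (l = 1, l = 2, l = 3)"

lemma supp_triple:
  "supp (a1, a2, a3) = (if a1 then {1} else {}) \<union> (if a2 then {2} else {}) \<union> (if a3 then {3} else {})"
  by (auto simp: supp_def gexp_def)

lemma mem_supp: "l \<in> supp (a1, a2, a3) \<longleftrightarrow> (l = 1 \<and> a1) \<or> (l = 2 \<and> a2) \<or> (l = 3 \<and> a3)"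
  by (auto simp: supp_def gexp_def)

lemma gexp_eq_of_bool: "l \<in> {1,2,3} \<Longrightarrow> gexp g l = of_bool (l \<in> supp g)"
  by (auto simp: supp_def gexp_def split: prod.splits)

lemma supp_subset: "supp g \<subseteq> {1,2,3}"
  by (auto simp: supp_def)

lemma finite_supp [simp]: "finite (supp g)"
  using finite_subset[OF supp_subset] by blast

lemma supp_inject: "supp g = supp h \<longleftrightarrow> g = h"
proof
  assume "supp g = supp h"
  then have "l \<in> supp g \<longleftrightarrow> l \<in> supp h" for l
    by simp
  from this[of 1] this[of 2] this[of 3] show "g = h"
    by (cases g; cases h) (simp add: mem_supp)
qed simp

lemma supp_gmul: "supp (gmul g h) = (supp g - supp h) \<union> (supp h - supp g)"
  by (cases g; cases h) (auto simp: supp_triple gmul_def split: if_splits)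

lemma supp_eq_empty_iff: "supp g = {} \<longleftrightarrow> g = gone"
  by (cases g) (auto simp: supp_triple gone_def split: if_splits)

lemma supp_gone [simp]: "supp gone = {}"
  by (simp add: supp_eq_empty_iff)

lemma supp_gen: "l \<in> {1,2,3} \<Longrightarrow> supp (gen l) = {l}"
  by (auto simp: supp_triple gen_def)

lemma supp_gmul_gen:
  "i \<in> {1,2,3} \<Longrightarrow> j \<in> {1,2,3} \<Longrightarrow> i \<noteq> j \<Longrightarrow> supp (gmul (gen i) (gen j)) = {i, j}"
  by (auto simp: supp_gmul supp_gen)

lemma prod_sign_card:
  "finite A \<Longrightarrow> (\<Prod>l\<in>A. if l \<in> S then -1 else 1) = (-1 :: 'a::comm_ring_1) ^ card (A \<inter> S)"
  by (simp add: prod.inter_restrict[symmetric])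

lemma Phi_sign: "Phi a b c = (-1 :: 'a::field) ^ card (supp a \<inter> supp b \<inter> supp c)"
proof -
  have "gexp a l * ((gexp b l + gexp c l) div 2) = of_bool (l \<in> supp a \<inter> supp b \<inter> supp c)"
    if "l \<in> {1,2,3}" for l
    using that by (simp add: gexp_eq_of_bool)
  then have "Phi a b c = (\<Prod>l\<in>{1,2,3}. if l \<in> supp a \<inter> supp b \<inter> supp c then -1 else (1::'a))"
    unfolding Phi_def by (intro prod.cong) auto
  also have "\<dots> = (-1) ^ card ({1,2,3} \<inter> (supp a \<inter> supp b \<inter> supp c))"
    by (rule prod_sign_card) simp
  also have "{1,2,3} \<inter> (supp a \<inter> supp b \<inter> supp c) = supp a \<inter> supp b \<inter> supp c"
    using supp_subset[of a] by blast
  finally show ?thesis .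
qed

lemma Phitilde_Phi_sign:
  "Phitilde Phi g e f = (-1 :: 'a::field) ^ card (supp g \<inter> supp e \<inter> supp f)"
  by (cases "even (card (supp g \<inter> supp e \<inter> supp f))") (simp_all add: Phitilde_def Phi_sign Int_ac)

lemma gmul_self: "gmul g g = gone"
  by (cases g) (simp add: gmul_def gone_def)

lemma quasi_char_Phi_mult:
  assumes "quasi_char (Phitilde Phi g) \<chi>"
  shows "\<chi> e * \<chi> f = (-1) ^ card (supp g \<inter> supp e \<inter> supp f) * \<chi> (gmul e f)"
proof -
  have "\<chi> e * \<chi> f = Phitilde Phi g e f * \<chi> (gmul e f)"
    using assms unfolding quasi_char_def by blast
  then show ?thesis
    by (simp only: Phitilde_Phi_sign)
qed

lemma quasi_char_Phi_square:
  assumes "quasi_char (Phitilde Phi g) \<chi>"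
  shows "\<chi> f * \<chi> f = (-1) ^ card (supp g \<inter> supp f)"
  using quasi_char_Phi_mult[OF assms, of f f] assms by (simp add: quasi_char_def gmul_self)

lemma quasi_char_Phi_disjoint:
  assumes "quasi_char (Phitilde Phi g) \<chi>" and "supp e \<inter> supp f = {}"
  shows "\<chi> (gmul e f) = \<chi> e * \<chi> f"
  using quasi_char_Phi_mult[OF assms(1), of e f] assms(2) by (simp add: Int_assoc)

lemma quasi_char_Phi_expand:
  assumes "quasi_char (Phitilde Phi g) \<chi>"
  shows "\<chi> h = (\<Prod>l\<in>supp h. \<chi> (gen l))"
proof (induction "card (supp h)" arbitrary: h)
  case 0
  then have "h = gone"
    by (metis card_0_eq finite_supp supp_eq_empty_iff)
  then show ?case
    using assms by (simp add: quasi_char_def supp_eq_empty_iff)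
next
  case (Suc n)
  then obtain l where l: "l \<in> supp h"
    by (metis card.empty equals0I nat.distinct(1))
  define h' where "h' = gmul (gen l) h"
  have l_gen: "supp (gen l) = {l}"
    using l supp_subset[of h] by (intro supp_gen) blast
  have supp_h': "supp h' = supp h - {l}"
    using l by (auto simp: h'_def supp_gmul l_gen)
  have "supp h = supp (gmul (gen l) h')"
    using l by (auto simp: h'_def supp_gmul l_gen)
  then have h: "h = gmul (gen l) h'"
    by (simp add: supp_inject)
  have "\<chi> h = \<chi> (gen l) * \<chi> h'"
    unfolding h by (rule quasi_char_Phi_disjoint[OF assms]) (simp add: l_gen supp_h')
  also have "\<chi> h' = (\<Prod>l\<in>supp h - {l}. \<chi> (gen l))"
    using Suc.hyps(1)[of h'] Suc.hyps(2) l by (simp add: supp_h')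
  finally show ?case
    using l by (simp add: prod.remove)
qed

lemma prod_inverse_rows_pairing:
  fixes c :: "'i \<Rightarrow> 'i \<Rightarrow> 'a::field"
  assumes "finite R" "finite Q"
    and off_diag: "\<And>m l. m \<in> R \<Longrightarrow> l \<in> Q \<Longrightarrow> m \<noteq> l \<Longrightarrow> c m l * c l m = 1"
    and diag: "\<And>m. m \<in> R \<Longrightarrow> m \<in> Q \<Longrightarrow> c m m * c m m = -1"
  shows "(\<Prod>m\<in>R. inverse (\<Prod>l\<in>Q. c m l)) * (\<Prod>m\<in>Q. inverse (\<Prod>l\<in>R. c m l))
    = (-1) ^ card (R \<inter> Q)"
proof -
  have inverse_prod: "inverse (\<Prod>l\<in>A. f l) = (\<Prod>l\<in>A. inverse (f l))" for A and f :: "'i \<Rightarrow> 'a"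
    using prod_inversef[of f A] by (simp add: comp_def)
  have "(\<Prod>m\<in>R. inverse (\<Prod>l\<in>Q. c m l)) * (\<Prod>m\<in>Q. inverse (\<Prod>l\<in>R. c m l))
      = (\<Prod>m\<in>R. \<Prod>l\<in>Q. inverse (c m l) * inverse (c l m))"
    unfolding inverse_prod prod.distrib prod.swap[of _ Q R] ..
  also have "\<dots> = (\<Prod>m\<in>R. \<Prod>l\<in>Q. if m = l then -1 else 1)"
  proof (intro prod.cong refl)
    fix m l
    assume "m \<in> R" "l \<in> Q"
    then have "c m l * c l m = (if m = l then -1 else 1)"
      using off_diag diag by auto
    then have "inverse (c m l * c l m) = (if m = l then -1 else 1)"
      by simp
    then show "inverse (c m l) * inverse (c l m) = (if m = l then -1 else 1)"
      by simp
  qed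
  also have "\<dots> = (\<Prod>m\<in>R. if m \<in> Q then -1 else 1)"
    using assms(2) by simp
  also have "\<dots> = (-1) ^ card (R \<inter> Q)"
    using assms(1) by (rule prod_sign_card)
  finally show ?thesis .
qed

lemma prod_rows_diagonal:
  fixes c :: "'i \<Rightarrow> 'i \<Rightarrow> 'a::field"
  assumes "finite Q" and "\<And>m l. m \<in> Q \<Longrightarrow> l \<in> Q \<Longrightarrow> m \<noteq> l \<Longrightarrow> c m l * c l m = 1"
  shows "(\<Prod>m\<in>Q. \<Prod>l\<in>Q. c m l) = (\<Prod>m\<in>Q. c m m)"
  using assms
proof (induction Q rule: finite_induct)
  case (insert a Q)
  have "(\<Prod>m\<in>insert a Q. \<Prod>l\<in>insert a Q. c m l)
      = c a a * (\<Prod>l\<in>Q. c a l * c l a) * (\<Prod>m\<in>Q. \<Prod>l\<in>Q. c m l)"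
    using insert.hyps by (simp add: prod.distrib mult.assoc)
  also have "(\<Prod>l\<in>Q. c a l * c l a) = 1"
    using insert.hyps(2) insert.prems by (intro prod.neutral) blast
  finally show ?case
    using insert by simp
qed simp

lemma subset_123_cases:
  assumes "A \<subseteq> {1,2,3::nat}"
  shows "A \<in> {{}, {1}, {2}, {3}, {1,2}, {1,3}, {2,3}, {1,2,3}}"
proof -
  have "A \<in> Pow {1,2,3}" using assms by simp
  then show ?thesis by (simp add: Pow_insert insert_commute)
qed

lemma card_2_even_inter_eq:
  assumes "A \<subseteq> {1,2,3::nat}" "B \<subseteq> {1,2,3}" "card A = 2" "card B = 2" "even (card (A \<inter> B))"
  shows "A = B"
  using subset_123_cases[OF assms(1)] subset_123_cases[OF assms(2)] assms(3-5) by auto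

lemma even_inter_full_card_2:
  assumes "A \<subseteq> {1,2,3::nat}" "A \<noteq> {}" "even (card (A \<inter> {1,2,3}))"
  shows "card A = 2"
  using subset_123_cases[OF assms(1)] assms(2-3) by auto

lemma card_1_2_even_inter_complement:
  assumes "A \<subseteq> {1,2,3::nat}" "B \<subseteq> {1,2,3}" "card A = 1" "card B = 2" "even (card (A \<inter> B))"
  shows "A = {1,2,3} - B"
  using subset_123_cases[OF assms(1)] subset_123_cases[OF assms(2)] assms(3-5) by auto

lemma card_2_subset_123:
  assumes "A \<subseteq> {1,2,3::nat}" "card A = 2"
  obtains i j where "1 \<le> i" "i < j" "j \<le> 3" "A = {i, j}"
  using subset_123_cases[OF assms(1)] assms(2) by (auto intro: that[of 1 2] that[of 1 3] that[of 2 3])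

lemma square_eq_minus_one_cases:
  fixes u v :: "'a::field"
  assumes "u * u = -1" "v * v = -1"
  shows "u = v \<or> u * v = 1"
proof -
  have "(u - v) * (u + v) = 0"
    using assms by (simp add: algebra_simps)
  then have "u = v \<or> u = -v"
    by (auto simp: eq_neg_iff_add_eq_0)
  then show ?thesis
    using assms(2) by auto
qed

lemma square_eq_minus_one_pigeonhole:
  fixes u1 u2 u3 :: "'a::field"
  assumes "u1 * u1 = -1" "u2 * u2 = -1" "u3 * u3 = -1"
  shows "u1 = u2 \<or> u1 = u3 \<or> u2 = u3"
  using square_eq_minus_one_cases[OF assms(1,2)] square_eq_minus_one_cases[OF assms(1,3)] assms(1)
  by (metis mult.left_commute mult_cancel_left1 mult.commute)

locale Phi_admissible_series =
  fixes N :: nat and \<chi> :: "nat \<Rightarrow> G \<Rightarrow> 'a::field_char_0" and x :: "nat \<Rightarrow> G"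
  assumes admissible: "admissible Phi N \<chi> x"
    and three_le_N: "3 \<le> N"
    and x_gen: "l \<in> {1,2,3} \<Longrightarrow> x l = gen l"
begin

lemma quasi_char: "i \<in> {1..N} \<Longrightarrow> quasi_char (Phitilde Phi (x i)) (\<chi> i)"
  using admissible by (simp add: admissible_def)

lemma chi_swap:
  assumes "i \<in> {1..N}" "j \<in> {1..N}" "i \<noteq> j"
  shows "\<chi> j (x i) = inverse (\<chi> i (x j))"
proof -
  have "\<chi> i (x j) * \<chi> j (x i) = 1"
    using admissible assms by (simp add: admissible_def)
  then show ?thesis
    by (simp add: inverse_unique)
qed

lemma generator_index: "l \<in> {1,2,3} \<Longrightarrow> l \<in> {1..N}"
  using three_le_N by auto

lemma generator_chi_off_diag:
  "m \<in> {1,2,3} \<Longrightarrow> l \<in> {1,2,3} \<Longrightarrow> m \<noteq> l \<Longrightarrow> \<chi> m (gen l) * \<chi> l (gen m) = 1"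
  using admissible generator_index by (auto simp: admissible_def x_gen[symmetric])

lemma generator_chi_square: "l \<in> {1,2,3} \<Longrightarrow> \<chi> l (x l) * \<chi> l (x l) = -1"
  using quasi_char_Phi_square[OF quasi_char[OF generator_index]] by (simp add: x_gen supp_gen)

lemma generator_chi_diag: "l \<in> {1,2,3} \<Longrightarrow> \<chi> l (gen l) * \<chi> l (gen l) = -1"
  using generator_chi_square by (simp add: x_gen)

lemma tail_index: "q \<in> {4..N} \<Longrightarrow> q \<in> {1..N}"
  by simp

lemma tail_supp_nonempty: "q \<in> {4..N} \<Longrightarrow> supp (x q) \<noteq> {}"
  using admissible by (auto simp: admissible_def supp_eq_empty_iff)

lemma tail_chi:
  assumes "q \<in> {4..N}"
  shows "\<chi> q h = (\<Prod>m\<in>supp h. inverse (\<Prod>l\<in>supp (x q). \<chi> m (gen l)))"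
proof -
  have gen_value: "\<chi> q (gen m) = inverse (\<Prod>l\<in>supp (x q). \<chi> m (gen l))" if "m \<in> supp h" for m
  proof -
    have m: "m \<in> {1,2,3}"
      using that supp_subset by blast
    then have "\<chi> q (x m) = inverse (\<chi> m (x q))"
      using assms generator_index[OF m] by (intro chi_swap) auto
    also have "\<chi> m (x q) = (\<Prod>l\<in>supp (x q). \<chi> m (gen l))"
      by (rule quasi_char_Phi_expand[OF quasi_char[OF generator_index[OF m]]])
    finally show ?thesis
      using x_gen[OF m] by simp
  qed
  have "\<chi> q h = (\<Prod>m\<in>supp h. \<chi> q (gen m))"
    by (rule quasi_char_Phi_expand[OF quasi_char[OF tail_index[OF assms]]])
  also have "\<dots> = (\<Prod>m\<in>supp h. inverse (\<Prod>l\<in>supp (x q). \<chi> m (gen l)))"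
    using gen_value by (rule prod.cong[OF refl])
  finally show ?thesis .
qed

lemma tail_overlap_even:
  assumes "q \<in> {4..N}" "r \<in> {4..N}" "q \<noteq> r"
  shows "even (card (supp (x q) \<inter> supp (x r)))"
proof -
  have "(-1 :: 'a) ^ card (supp (x r) \<inter> supp (x q)) = \<chi> q (x r) * \<chi> r (x q)"
    unfolding tail_chi[OF assms(1)] tail_chi[OF assms(2)]
    by (intro prod_inverse_rows_pairing[symmetric])
      (auto intro: generator_chi_off_diag generator_chi_diag dest: subsetD[OF supp_subset])
  also have "\<dots> = 1"
    using admissible assms by (simp add: admissible_def)
  finally show ?thesis
    by (metis Int_commute neg_one_odd_power one_neq_neg_one)
qed

lemma tail_chi_diag:
  assumes "q \<in> {4..N}"
  shows "\<chi> q (x q) = inverse (\<Prod>m\<in>supp (x q). \<chi> m (x m))"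
proof -
  have "\<chi> q (x q) = inverse (\<Prod>m\<in>supp (x q). \<Prod>l\<in>supp (x q). \<chi> m (gen l))"
    using prod_inversef[of "\<lambda>m. \<Prod>l\<in>supp (x q). \<chi> m (gen l)"] by (simp add: tail_chi[OF assms] comp_def)
  also have "(\<Prod>m\<in>supp (x q). \<Prod>l\<in>supp (x q). \<chi> m (gen l)) = (\<Prod>m\<in>supp (x q). \<chi> m (gen m))"
    by (intro prod_rows_diagonal finite_supp)
      (auto intro: generator_chi_off_diag dest: subsetD[OF supp_subset])
  also have "\<dots> = (\<Prod>m\<in>supp (x q). \<chi> m (x m))"
    by (intro prod.cong refl) (auto simp: x_gen dest: subsetD[OF supp_subset])
  finally show ?thesis .
qed

lemma tail_pair_chi_eq:
  assumes "q \<in> {4..N}" "supp (x q) = {i, j}" "i \<noteq> j"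
  shows "\<chi> i (x i) = \<chi> j (x j)"
proof -
  have ij: "i \<in> {1,2,3}" "j \<in> {1,2,3}"
    using assms(2) supp_subset[of "x q"] by auto
  have "\<chi> q (x q) \<noteq> 1"
    using admissible assms(1) by (simp add: admissible_def)
  moreover have "\<chi> q (x q) = inverse (\<chi> i (x i) * \<chi> j (x j))"
    using assms(2,3) by (simp add: tail_chi_diag[OF assms(1)])
  ultimately have "\<chi> i (x i) * \<chi> j (x j) \<noteq> 1"
    by (metis inverse_1)
  then show ?thesis
    using square_eq_minus_one_cases[OF generator_chi_square[OF ij(1)] generator_chi_square[OF ij(2)]]
    by blast
qed

lemma generator_pair_chi_eq:
  obtains i j where "1 \<le> i" "i < j" "j \<le> 3" "\<chi> i (x i) = \<chi> j (x j)"
proof -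
  have "\<chi> 1 (x 1) = \<chi> 2 (x 2) \<or> \<chi> 1 (x 1) = \<chi> 3 (x 3) \<or> \<chi> 2 (x 2) = \<chi> 3 (x 3)"
    by (rule square_eq_minus_one_pigeonhole) (simp_all add: generator_chi_square)
  then show ?thesis
    using that[of 1 2] that[of 1 3] that[of 2 3] by auto
qed

lemma tail_full_forces_pair:
  assumes "q0 \<in> {4..N}" "supp (x q0) = {1,2,3}" "r \<in> {4..N}" "r \<noteq> q0"
  shows "card (supp (x r)) = 2"
  using tail_overlap_even[OF assms(3,1,4)] assms(2,3)
  by (intro even_inter_full_card_2 supp_subset tail_supp_nonempty) auto

lemma tail_pairs_eq:
  assumes "q \<in> {4..N}" "r \<in> {4..N}" "card (supp (x q)) = 2" "card (supp (x r)) = 2"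
  shows "x q = x r"
proof (cases "q = r")
  case False
  then show ?thesis
    using card_2_even_inter_eq[OF supp_subset supp_subset assms(3,4) tail_overlap_even[OF assms(1,2)]]
    by (simp add: supp_inject)
qed simp

lemma tail_single_unique:
  assumes "q \<in> {4..N}" "r \<in> {4..N}" "q \<noteq> r" "card (supp (x q)) = 1"
  shows "x q \<noteq> x r"
  using tail_overlap_even[OF assms(1-3)] assms(4) by auto

lemma tail_single_complement:
  assumes "q \<in> {4..N}" "card (supp (x q)) = 1" "r \<in> {4..N}" "card (supp (x r)) = 2"
  shows "supp (x q) = {1,2,3} - supp (x r)"
proof -
  have "q \<noteq> r"
    using assms(2,4) by auto
  with assms(1,3) have "even (card (supp (x q) \<inter> supp (x r)))"
    by (rule tail_overlap_even)
  with assms(2,4) show ?thesis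
    by (intro card_1_2_even_inter_complement supp_subset)
qed

lemma tail_pair_form:
  assumes "q \<in> {4..N}" "card (supp (x q)) = 2"
  obtains i j where "1 \<le> i" "i < j" "j \<le> 3" "x q = gmul (x i) (x j)" "\<chi> i (x i) = \<chi> j (x j)"
proof -
  obtain i j where ij: "1 \<le> i" "i < j" "j \<le> 3" "supp (x q) = {i, j}"
    using card_2_subset_123[OF supp_subset assms(2)] by blast
  moreover have "i \<in> {1,2,3}" "j \<in> {1,2,3}"
    using ij by auto
  ultimately have "supp (x q) = supp (gmul (x i) (x j))"
    by (simp add: x_gen supp_gmul_gen)
  then show ?thesis
    using that ij tail_pair_chi_eq[OF assms(1) ij(4)] by (simp add: supp_inject)
qed

lemma tail_supp_cases:
  assumes "q \<in> {4..N}"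
  shows "card (supp (x q)) = 1 \<or> card (supp (x q)) = 2 \<or> supp (x q) = {1,2,3}"
proof -
  have "card (supp (x q)) \<le> card {1,2,3::nat}"
    by (rule card_mono[OF _ supp_subset]) simp
  moreover have "card (supp (x q)) \<noteq> 0"
    using tail_supp_nonempty[OF assms] by simp
  moreover have "card (supp (x q)) = 3 \<Longrightarrow> supp (x q) = {1,2,3}"
    by (rule card_subset_eq[OF _ supp_subset]) simp_all
  ultimately show ?thesis
    by force
qed

lemma tail_single_is_generator:
  assumes "card (supp (x q)) = 1"
  obtains k where "k \<in> {1,2,3}" "supp (x q) = {k}" "x q = x k"
proof -
  obtain k where k: "supp (x q) = {k}"
    using assms card_1_singletonE by blast
  moreover have k_mem: "k \<in> {1,2,3}"
    using k supp_subset[of "x q"] by blast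
  ultimately have "supp (x q) = supp (x k)"
    by (simp add: x_gen supp_gen)
  then show ?thesis
    using that[OF k_mem k] by (simp add: supp_inject)
qed

lemma top_degree_case:
  assumes "q0 \<in> {4..N}" "supp (x q0) = {1,2,3}"
  obtains i j where "1 \<le> i" "i < j" "j \<le> 3" "\<chi> i (x i) = \<chi> j (x j)"
    "\<forall>l\<in>{4..N} - {q0}. x l = gmul (x i) (x j)"
proof (cases "{4..N} - {q0} = {}")
  case True
  then show ?thesis
    using generator_pair_chi_eq that by blast
next
  case False
  then obtain r where r: "r \<in> {4..N} - {q0}"
    by blast
  have pairs: "card (supp (x l)) = 2" if "l \<in> {4..N} - {q0}" for l
    using tail_full_forces_pair[OF assms] that by blast
  obtain i j where ij: "1 \<le> i" "i < j" "j \<le> 3" "x r = gmul (x i) (x j)" "\<chi> i (x i) = \<chi> j (x j)"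
    using tail_pair_form[OF _ pairs[OF r]] r by blast
  have "x l = x r" if "l \<in> {4..N} - {q0}" for l
    using tail_pairs_eq[OF _ _ pairs[OF that] pairs[OF r]] that r by blast
  then show ?thesis
    using ij(4) by (intro that[OF ij(1-3,5)]) simp
qed

lemma single_and_pair_degree_case:
  assumes "q0 \<in> {4..N}" "card (supp (x q0)) = 1" "q1 \<in> {4..N}" "card (supp (x q1)) = 2"
  obtains k i j where "k \<in> {1,2,3}" "x q0 = x k" "i \<noteq> j" "{i, j} = {1,2,3} - {k}"
    "\<chi> i (x i) = \<chi> j (x j)" "\<forall>l\<in>{4..N} - {q0}. x l = gmul (x i) (x j)"
proof -
  obtain i j where ij: "1 \<le> i" "i < j" "j \<le> 3" "x q1 = gmul (x i) (x j)" "\<chi> i (x i) = \<chi> j (x j)"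
    using tail_pair_form[OF assms(3,4)] by blast
  have ij_mem: "i \<in> {1,2,3}" "j \<in> {1,2,3}"
    using ij by auto
  have supp_q1: "supp (x q1) = {i, j}"
    using ij ij_mem by (simp add: x_gen supp_gmul_gen)
  have complement: "supp (x q) = {1,2,3} - {i, j}" if "q \<in> {4..N}" "card (supp (x q)) = 1" for q
    using tail_single_complement[OF that assms(3,4)] supp_q1 by simp
  obtain k where k: "k \<in> {1,2,3}" "supp (x q0) = {k}" "x q0 = x k"
    using tail_single_is_generator[OF assms(2)] by blast
  have ij_k: "{i, j} = {1,2,3} - {k}"
    using complement[OF assms(1,2)] k(2) ij_mem by auto
  have "x l = x q1" if l: "l \<in> {4..N}" "l \<noteq> q0" for l
    using tail_supp_cases[OF l(1)]
  proof (elim disjE)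
    assume "card (supp (x l)) = 1"
    then have "supp (x l) = supp (x q0)"
      using complement[OF l(1)] complement[OF assms(1,2)] by simp
    then have "x l = x q0"
      by (simp add: supp_inject)
    then show ?thesis
      using tail_single_unique[OF assms(1) l(1)] l(2) assms(2) by auto
  next
    assume "supp (x l) = {1,2,3}"
    then show ?thesis
      using tail_full_forces_pair[OF l(1) _ assms(1)] l(2) assms(2) by simp
  qed (use tail_pairs_eq[OF l(1) assms(3) _ assms(4)] in blast)
  then show ?thesis
    using ij(2,4) by (intro that[OF k(1,3) _ ij_k ij(5)]) auto
qed

lemma pair_degrees_case:
  assumes "q1 \<in> {4..N}" "\<forall>q\<in>{4..N}. card (supp (x q)) = 2"
  obtains i j where "1 \<le> i" "i < j" "j \<le> 3" "\<chi> i (x i) = \<chi> j (x j)"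
    "\<forall>l\<in>{4..N}. x l = gmul (x i) (x j)"
proof -
  obtain i j where ij: "1 \<le> i" "i < j" "j \<le> 3" "x q1 = gmul (x i) (x j)" "\<chi> i (x i) = \<chi> j (x j)"
    using tail_pair_form assms by blast
  have "x l = x q1" if "l \<in> {4..N}" for l
    using tail_pairs_eq[OF that assms(1)] assms(2) that assms(1) by blast
  then show ?thesis
    using ij(4) by (intro that[OF ij(1-3,5)]) simp
qed

lemma single_degrees_case:
  assumes "\<forall>q\<in>{4..N}. card (supp (x q)) = 1"
  shows "inj_on x {4..N}" "x ` {4..N} \<subseteq> {x 1, x 2, x 3}" "N \<le> 6"
proof -
  show inj: "inj_on x {4..N}"
    using tail_single_unique assms by (meson inj_onI)
  show sub: "x ` {4..N} \<subseteq> {x 1, x 2, x 3}"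
    using tail_single_is_generator assms by blast
  have "card {4..N} \<le> card {x 1, x 2, x 3}"
    using card_inj_on_le[OF inj sub] by simp
  also have "\<dots> \<le> 3"
    by (rule card_insert_le_m1) (simp_all add: card_insert_le_m1)
  finally show "N \<le> 6"
    by simp
qed

lemma degree_classification:
  obtains (top_and_pair) q0 i j where "q0 \<in> {4..N}" "x q0 = gmul (gmul (x 1) (x 2)) (x 3)"
    "1 \<le> i" "i < j" "j \<le> 3" "\<chi> i (x i) = \<chi> j (x j)" "\<forall>l\<in>{4..N} - {q0}. x l = gmul (x i) (x j)"
  | (single_and_pair) q0 k i j where "q0 \<in> {4..N}" "5 \<le> N" "k \<in> {1,2,3}" "x q0 = x k"
    "i \<noteq> j" "{i, j} = {1,2,3} - {k}" "\<chi> i (x i) = \<chi> j (x j)"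
    "\<forall>l\<in>{4..N} - {q0}. x l = gmul (x i) (x j)"
  | (pairs) i j where "4 \<le> N" "1 \<le> i" "i < j" "j \<le> 3" "\<chi> i (x i) = \<chi> j (x j)"
    "\<forall>l\<in>{4..N}. x l = gmul (x i) (x j)"
  | (singles) "inj_on x {4..N}" "x ` {4..N} \<subseteq> {x 1, x 2, x 3}" "N \<le> 6"
proof -
  consider (top) q0 where "q0 \<in> {4..N}" "supp (x q0) = {1,2,3}"
    | (single_pair) q0 q1 where "q0 \<in> {4..N}" "card (supp (x q0)) = 1"
        "q1 \<in> {4..N}" "card (supp (x q1)) = 2"
    | (pairs) q1 where "q1 \<in> {4..N}" "\<forall>q\<in>{4..N}. card (supp (x q)) = 2"
    | (singles) "\<forall>q\<in>{4..N}. card (supp (x q)) = 1"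
    using tail_supp_cases by metis
  then show ?thesis
  proof cases
    case top
    have "supp (x q0) = supp (gmul (gmul (x 1) (x 2)) (x 3))"
      using top(2) by (auto simp: supp_gmul x_gen supp_gen)
    then have "x q0 = gmul (gmul (x 1) (x 2)) (x 3)"
      by (simp add: supp_inject)
    moreover obtain i j where "1 \<le> i" "i < j" "j \<le> 3" "\<chi> i (x i) = \<chi> j (x j)"
      "\<forall>l\<in>{4..N} - {q0}. x l = gmul (x i) (x j)"
      by (rule top_degree_case[OF top])
    ultimately show ?thesis
      by (rule that(1)[OF top(1)])
  next
    case single_pair
    then have "5 \<le> N"
      by (cases "q0 = q1") auto
    moreover obtain k i j where "k \<in> {1,2,3}" "x q0 = x k" "i \<noteq> j" "{i, j} = {1,2,3} - {k}"
      "\<chi> i (x i) = \<chi> j (x j)" "\<forall>l\<in>{4..N} - {q0}. x l = gmul (x i) (x j)"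
      by (rule single_and_pair_degree_case[OF single_pair])
    ultimately show ?thesis
      by (rule that(2)[OF single_pair(1)])
  next
    case pairs
    then have "4 \<le> N"
      by simp
    obtain i j where "1 \<le> i" "i < j" "j \<le> 3" "\<chi> i (x i) = \<chi> j (x j)"
      "\<forall>l\<in>{4..N}. x l = gmul (x i) (x j)"
      by (rule pair_degrees_case[OF pairs])
    then show ?thesis
      by (rule that(3)[OF \<open>4 \<le> N\<close>])
  next
    case singles
    show ?thesis
      using single_degrees_case[OF singles] by (rule that(4))
  qed
qed

end

lemma transpose_tail_const:
  fixes f :: "nat \<Rightarrow> 'b"
  assumes "q0 \<in> {4..N}" "\<forall>l\<in>{4..N} - {q0}. f l = c"
  shows "\<forall>l\<in>{5..N}. f (Transposition.transpose 4 q0 l) = c"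
  using assms by (auto simp: Transposition.transpose_def)

theorem proposition5p6:
  fixes N :: nat and \<chi> :: "nat \<Rightarrow> G \<Rightarrow> 'a::field_char_0" and x :: "nat \<Rightarrow> G"
  assumes "alg_closed TYPE('a)"
    and "N \<ge> 3"
    and "admissible Phi N \<chi> x"
    and "x 1 = gen1" and "x 2 = gen2" and "x 3 = gen3"
  shows "\<exists>\<sigma>. bij_betw \<sigma> {4..N} {4..N} \<and>
    ((N \<le> 6 \<and> inj_on (\<lambda>l. x (\<sigma> l)) {4..N} \<and> (\<forall>l\<in>{4..N}. x (\<sigma> l) \<in> {x 1, x 2, x 3}))
   \<or> (N \<ge> 5 \<and> (\<exists>k\<in>{1,2,3}. x (\<sigma> 4) = x k \<and>
        (\<exists>i j. i \<noteq> j \<and> {i, j} = {1,2,3} - {k} \<and> \<chi> i (x i) = \<chi> j (x j) \<and>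
           (\<forall>l\<in>{5..N}. x (\<sigma> l) = gmul (x i) (x j)))))
   \<or> (N \<ge> 4 \<and> (\<exists>i j. 1 \<le> i \<and> i < j \<and> j \<le> 3 \<and>
        (\<forall>l\<in>{4..N}. x (\<sigma> l) = gmul (x i) (x j)) \<and> \<chi> i (x i) = \<chi> j (x j)))
   \<or> (N \<ge> 4 \<and> x (\<sigma> 4) = gmul (gmul (x 1) (x 2)) (x 3) \<and>
        (\<exists>i j. 1 \<le> i \<and> i < j \<and> j \<le> 3 \<and>
        (\<forall>l\<in>{5..N}. x (\<sigma> l) = gmul (x i) (x j)) \<and> \<chi> i (x i) = \<chi> j (x j))))"
    (is "\<exists>\<sigma>. ?bij \<sigma> \<and> (?D1 \<sigma> \<or> ?D2 \<sigma> \<or> ?D3 \<sigma> \<or> ?D4 \<sigma>)")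
proof -
  interpret Phi_admissible_series N \<chi> x
    using assms(2-6) by unfold_locales (auto simp: gen_def gen1_def gen2_def gen3_def)
  show ?thesis
  proof (cases rule: degree_classification)
    case (top_and_pair q0 i j)
    let ?\<sigma> = "Transposition.transpose 4 q0"
    have D4: "?D4 ?\<sigma>"
      using top_and_pair transpose_tail_const[OF top_and_pair(1,7)]
      by (intro conjI exI[of _ i] exI[of _ j]) simp_all
    show ?thesis
      using top_and_pair(1) by (intro exI[of _ ?\<sigma>] conjI[OF _ disjI2[OF disjI2[OF disjI2[OF D4]]]]) simp
  next
    case (single_and_pair q0 k i j)
    let ?\<sigma> = "Transposition.transpose 4 q0"
    have D2: "?D2 ?\<sigma>"
      using single_and_pair transpose_tail_const[OF single_and_pair(1,8)]
      by (intro conjI bexI[of _ k] exI[of _ i] exI[of _ j]) simp_all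
    show ?thesis
      using single_and_pair(1) by (intro exI[of _ ?\<sigma>] conjI[OF _ disjI2[OF disjI1[OF D2]]]) simp
  next
    case (pairs i j)
    then have "?D3 id"
      by (intro conjI exI[of _ i] exI[of _ j]) auto
    then show ?thesis
      by (intro exI[of _ id] conjI[OF bij_betw_id disjI2[OF disjI2[OF disjI1]]])
  next
    case singles
    then have "?D1 id"
      by auto
    then show ?thesis
      by (intro exI[of _ id] conjI[OF bij_betw_id disjI1])
  qed
qed

end
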